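(* For all loop-free hybrid programs $A,B,C,D$ and every set of variables $H$: if $FV(C)\cup FV(D)\subseteq H$, $A\equiv_H B$, and $C\equiv_H D$, then $(A;C)\equiv_H(B;D)$.
   Context: Hybrid programs and their transition semantics $[\![\cdot]\!]$ are as in differential dynamic logic ($x:=\theta$, $x:=*$, $?\phi$, $x'=\theta\,\&\,Q$, $;$, $\cup$, $^*$); a program is loop-free if it contains no $^*$. $FV(\alpha)$ is the standard $d\mathcal{L}$ set of free variables of $\alpha$: $FV(x:=\theta)=FV(\theta)$, $FV(x:=* )=\emptyset$, $FV(?\phi)=FV(\phi)$, $FV(x'=\theta\,\&\,Q)=\{x\}\cup FV(\theta)\cup FV(Q)$, $FV(\alpha\cup\beta)=FV(\alpha)\cup FV(\beta)$, $FV(\alpha;\beta)=FV(\alpha)\cup(FV(\beta)\setminus MBV(\alpha))$, $FV(\alpha^* )=FV(\alpha)$, where $MBV$ (must-bound variables) is: $\{x\}$ for $x:=\theta$ and $x:=*$, $\emptyset$ for tests and loops, $\{x,x'\}$ for ODEs, $MBV(\alpha\cup\beta)=MBV(\alpha)\cap MBV(\beta)$, $MBV(\alpha;\beta)=MBV(\alpha)\cup MBV(\beta)$. States $\sigma,\sigma'$ satisfy $\sigma\approx_H\sigma'$ iff they agree on every variable in $H$. For loop-free programs, $\alpha\equiv_H\beta$ iff for all states $\sigma_0,\sigma_1$ with $(\sigma_0,\sigma_1)\in[\![\alpha]\!]$ there exist $\sigma'_0,\sigma'_1$ with $(\sigma'_0,\sigma'_1)\in[\![\beta]\!]$, $\sigma_0\approx_H\sigma'_0$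 and $\sigma_1\approx_H\sigma'_1$, and symmetrically with $\alpha,\beta$ exchanged. *)

theory Defs
  imports Complex_Main
begin

type_synonym ident = string

text \<open>Variables: plain variables x and differential symbols x'.\<close>
datatype var = Var ident | DVar ident

type_synonym state = "var \<Rightarrow> real"

datatype trm =
    V var
  | Const real
  | Plus trm trm
  | Times trm trm

datatype hp =
    Assign var trm
  | AssignAny var
  | Test fml
  | ODE ident trm fml         (* x' = theta & Q *)
  | Choice hp hp
  | Seq hp hp
  | Loop hp
and fml =
    Geq trm trm
  | Not fml
  | And fml fml
  | Exists var fml
  | Box hp fml

primrec tsem :: "trm \<Rightarrow> state \<Rightarrow> real" where
  "tsem (V x) s = s x"
| "tsem (Const c) s = c"
| "tsem (Plus a b) s = tsem a s + tsem b s"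
| "tsem (Times a b) s = tsem a s * tsem b s"

definition agree :: "state \<Rightarrow> state \<Rightarrow> var set \<Rightarrow> bool" where
  "agree s t H \<longleftrightarrow> (\<forall>v\<in>H. s v = t v)"

primrec psem :: "hp \<Rightarrow> (state \<times> state) set"
and fsem :: "fml \<Rightarrow> state set" where
  "psem (Assign x e) = {(s, t). t = s(x := tsem e s)}"
| "psem (AssignAny x) = {(s, t). \<exists>r. t = s(x := r)}"
| "psem (Test p) = {(s, t). t = s \<and> s \<in> fsem p}"
| "psem (ODE x e Q) = {(s, t). \<exists>(r::real) (f::real \<Rightarrow> state).
      0 \<le> r \<and> agree (f 0) s (- {DVar x}) \<and> t = f r \<and>
      (\<forall>z\<in>{0..r}.
          agree (f z) s (- {Var x, DVar x}) \<and>
          f z (DVar x) = tsem e (f z) \<and>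
          f z \<in> fsem Q \<and>
          ((\<lambda>u. f u (Var x)) has_real_derivative f z (DVar x)) (at z within {0..r}))}"
| "psem (Choice a b) = psem a \<union> psem b"
| "psem (Seq a b) = psem a O psem b"
| "psem (Loop a) = (psem a)\<^sup>*"
| "fsem (Geq a b) = {s. tsem a s \<ge> tsem b s}"
| "fsem (Not p) = - fsem p"
| "fsem (And p q) = fsem p \<inter> fsem q"
| "fsem (Exists x p) = {s. \<exists>r. s(x := r) \<in> fsem p}"
| "fsem (Box a p) = {s. \<forall>t. (s, t) \<in> psem a \<longrightarrow> t \<in> fsem p}"

primrec FVt :: "trm \<Rightarrow> var set" where
  "FVt (V x) = {x}"
| "FVt (Const c) = {}"
| "FVt (Plus a b) = FVt a \<union> FVt b"
| "FVt (Times a b) = FVt a \<union> FVt b"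

primrec MBV :: "hp \<Rightarrow> var set" where
  "MBV (Assign x e) = {x}"
| "MBV (AssignAny x) = {x}"
| "MBV (Test p) = {}"
| "MBV (ODE x e Q) = {Var x, DVar x}"
| "MBV (Choice a b) = MBV a \<inter> MBV b"
| "MBV (Seq a b) = MBV a \<union> MBV b"
| "MBV (Loop a) = {}"

primrec FV :: "hp \<Rightarrow> var set"
and FVf :: "fml \<Rightarrow> var set" where
  "FV (Assign x e) = FVt e"
| "FV (AssignAny x) = {}"
| "FV (Test p) = FVf p"
| "FV (ODE x e Q) = {Var x} \<union> FVt e \<union> FVf Q"
| "FV (Choice a b) = FV a \<union> FV b"
| "FV (Seq a b) = FV a \<union> (FV b - MBV a)"
| "FV (Loop a) = FV a"
| "FVf (Geq a b) = FVt a \<union> FVt b"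
| "FVf (Not p) = FVf p"
| "FVf (And p q) = FVf p \<union> FVf q"
| "FVf (Exists x p) = FVf p - {x}"
| "FVf (Box a p) = FV a \<union> (FVf p - MBV a)"

primrec loop_free :: "hp \<Rightarrow> bool" where
  "loop_free (Assign x e) = True"
| "loop_free (AssignAny x) = True"
| "loop_free (Test p) = True"
| "loop_free (ODE x e Q) = True"
| "loop_free (Choice a b) = (loop_free a \<and> loop_free b)"
| "loop_free (Seq a b) = (loop_free a \<and> loop_free b)"
| "loop_free (Loop a) = False"

definition hequiv :: "hp \<Rightarrow> var set \<Rightarrow> hp \<Rightarrow> bool" where
  "hequiv a H b \<longleftrightarrow>
     (\<forall>s0 s1. (s0, s1) \<in> psem a \<longrightarrow>
        (\<exists>t0 t1. (t0, t1) \<in> psem b \<and> agree s0 t0 H \<and> agree s1 t1 H)) \<and>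
     (\<forall>s0 s1. (s0, s1) \<in> psem b \<longrightarrow>
        (\<exists>t0 t1. (t0, t1) \<in> psem a \<and> agree s0 t0 H \<and> agree s1 t1 H))"

end

theory Submission
  imports Defs
begin

text \<open>Sequential composition preserves H-equivalence because of the coincidence property of
  dL: runs from states that agree on a superset \<open>X\<close> of the free variables of a program can be
  matched by runs whose final states agree on \<open>X\<close> together with the must-bound variables.
  Given runs of \<open>A\<close> and then \<open>C\<close>, H-equivalence supplies a matching run of \<open>B\<close> and a matching
  run of \<open>D\<close>, but the latter starts from a state that merely agrees on \<open>H\<close> with the final
  state of the \<open>B\<close>-run; since \<open>FV D \<subseteq> H\<close>, coincidence re-anchors it there.\<close>

lemma agree_sym: "agree s t X \<Longrightarrow> agree t s X"
  by (auto simp: agree_def)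

lemma agree_mono: "agree s t X \<Longrightarrow> Y \<subseteq> X \<Longrightarrow> agree s t Y"
  by (auto simp: agree_def)

lemma agree_trans: "agree s t X \<Longrightarrow> agree t u X \<Longrightarrow> agree s u X"
  by (auto simp: agree_def)

lemma tsem_coincidence: "agree s t (FVt e) \<Longrightarrow> tsem e s = tsem e t"
  by (induction e) (auto simp: agree_def)

lemma ODE_coincidence:
  assumes fsem_Q: "\<And>s t. agree s t (FVf Q) \<Longrightarrow> s \<in> fsem Q \<Longrightarrow> t \<in> fsem Q"
    and sub: "FV (ODE x e Q) \<subseteq> X" and ag: "agree s t X"
    and run: "(s, \<nu>) \<in> psem (ODE x e Q)"
  shows "\<exists>\<nu>'. (t, \<nu>') \<in> psem (ODE x e Q) \<and> agree \<nu> \<nu>' (X \<union> MBV (ODE x e Q))"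
proof -
  from run obtain r f where r0: "0 \<le> r" and f0: "agree (f 0) s (- {DVar x})" and \<nu>: "\<nu> = f r"
    and fz: "\<And>z. z \<in> {0..r} \<Longrightarrow> agree (f z) s (- {Var x, DVar x}) \<and>
        f z (DVar x) = tsem e (f z) \<and> f z \<in> fsem Q \<and>
        ((\<lambda>u. f u (Var x)) has_real_derivative f z (DVar x)) (at z within {0..r})"
    by (auto simp del: atLeastAtMost_iff)
  \<comment> \<open>The same trajectory on \<open>x\<close> and \<open>x'\<close>, with the frozen variables taken from \<open>t\<close>.\<close>
  define g where "g = (\<lambda>z v. if v \<in> {Var x, DVar x} then f z v else t v)"
  have agree_fg: "agree (f z) (g z) X" if "z \<in> {0..r}" for z
    using fz[OF that] ag unfolding agree_def g_def by auto
  have same_x: "(\<lambda>u. g u (Var x)) = (\<lambda>u. f u (Var x))"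
    by (auto simp: g_def)
  have g0: "agree (g 0) t (- {DVar x})"
  proof -
    have "f 0 (Var x) = s (Var x)" using f0 by (auto simp: agree_def)
    moreover have "s (Var x) = t (Var x)" using ag sub by (auto simp: agree_def)
    ultimately show ?thesis by (auto simp: agree_def g_def)
  qed
  have "agree (g z) t (- {Var x, DVar x}) \<and> g z (DVar x) = tsem e (g z) \<and> g z \<in> fsem Q \<and>
      ((\<lambda>u. g u (Var x)) has_real_derivative g z (DVar x)) (at z within {0..r})"
    if z: "z \<in> {0..r}" for z
  proof -
    have "tsem e (f z) = tsem e (g z)"
      using tsem_coincidence agree_mono[OF agree_fg[OF z]] sub by auto
    then have rhs: "g z (DVar x) = tsem e (g z)"
      using fz[OF z] by (simp add: g_def)
    have "g z \<in> fsem Q"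
      using fsem_Q agree_mono[OF agree_fg[OF z]] sub fz[OF z] by auto
    moreover have "g z (DVar x) = f z (DVar x)"
      by (simp add: g_def)
    ultimately show ?thesis
      using fz[OF z] rhs same_x by (auto simp: agree_def g_def)
  qed
  then have "(t, g r) \<in> psem (ODE x e Q)"
    using r0 g0 by (simp del: atLeastAtMost_iff) blast
  moreover have "agree \<nu> (g r) (X \<union> MBV (ODE x e Q))"
    using agree_fg[of r] r0 \<nu> by (auto simp: agree_def g_def)
  ultimately show ?thesis by blast
qed

lemma rtrancl_coincidence:
  assumes step: "\<And>s t \<nu>. agree s t X \<Longrightarrow> (s, \<nu>) \<in> R \<Longrightarrow> \<exists>\<nu>'. (t, \<nu>') \<in> R \<and> agree \<nu> \<nu>' X"
    and "(s, \<nu>) \<in> R\<^sup>*" and "agree s t X"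
  shows "\<exists>\<nu>'. (t, \<nu>') \<in> R\<^sup>* \<and> agree \<nu> \<nu>' X"
  using assms(2,3)
proof (induction rule: rtrancl_induct)
  case base
  then show ?case by blast
next
  case (step \<mu> \<nu>)
  then obtain \<mu>' where "(t, \<mu>') \<in> R\<^sup>*" "agree \<mu> \<mu>' X" by blast
  with step.hyps(2) assms(1) show ?case
    by (meson rtrancl_into_rtrancl)
qed

lemma coincidence:
  "\<forall>X s t \<nu>. FV a \<subseteq> X \<longrightarrow> agree s t X \<longrightarrow> (s, \<nu>) \<in> psem a \<longrightarrow>
      (\<exists>\<nu>'. (t, \<nu>') \<in> psem a \<and> agree \<nu> \<nu>' (X \<union> MBV a))"
  "\<forall>s t. agree s t (FVf p) \<longrightarrow> s \<in> fsem p \<longrightarrow> t \<in> fsem p"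
proof (induction a and p)
  case (Assign x e)
  have "tsem e s = tsem e t" if "FVt e \<subseteq> X" "agree s t X" for X s t
    using that tsem_coincidence agree_mono by blast
  then show ?case by (fastforce simp: agree_def)
next
  case (AssignAny x)
  then show ?case by (fastforce simp: agree_def)
next
  case (Test q)
  then show ?case by (simp, meson agree_mono)
next
  case (ODE x e Q)
  then show ?case using ODE_coincidence by blast
next
  case (Choice a b)
  show ?case
  proof (intro allI impI)
    fix X s t \<nu>
    assume sub: "FV (Choice a b) \<subseteq> X" and ag: "agree s t X" and run: "(s, \<nu>) \<in> psem (Choice a b)"
    have sim: "\<exists>\<nu>'. (t, \<nu>') \<in> psem (Choice a b) \<and> agree \<nu> \<nu>' (X \<union> MBV (Choice a b))"
      if "(t, \<nu>') \<in> psem c" "agree \<nu> \<nu>' (X \<union> MBV c)" "c \<in> {a, b}" for c \<nu>'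
      using that agree_mono[OF that(2), of "X \<union> MBV (Choice a b)"] by auto
    from run consider "(s, \<nu>) \<in> psem a" | "(s, \<nu>) \<in> psem b" by auto
    then show "\<exists>\<nu>'. (t, \<nu>') \<in> psem (Choice a b) \<and> agree \<nu> \<nu>' (X \<union> MBV (Choice a b))"
    proof cases
      case 1
      with Choice.IH(1)[rule_format, of X s t \<nu>] sub ag sim show ?thesis by auto
    next
      case 2
      with Choice.IH(2)[rule_format, of X s t \<nu>] sub ag sim show ?thesis by auto
    qed
  qed
next
  case (Seq a b)
  show ?case
  proof (intro allI impI)
    fix X s t \<nu>
    assume sub: "FV (Seq a b) \<subseteq> X" and ag: "agree s t X" and "(s, \<nu>) \<in> psem (Seq a b)"
    then obtain \<mu> where run_a: "(s, \<mu>) \<in> psem a" and run_b: "(\<mu>, \<nu>) \<in> psem b" by auto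
    have "FV a \<subseteq> X" "FV b \<subseteq> X \<union> MBV a"
      using sub by auto
    obtain \<mu>' where "(t, \<mu>') \<in> psem a" and ag_\<mu>: "agree \<mu> \<mu>' (X \<union> MBV a)"
      using Seq.IH(1)[rule_format, OF \<open>FV a \<subseteq> X\<close> ag run_a] by blast
    moreover obtain \<nu>' where "(\<mu>', \<nu>') \<in> psem b" "agree \<nu> \<nu>' (X \<union> MBV a \<union> MBV b)"
      using Seq.IH(2)[rule_format, OF \<open>FV b \<subseteq> X \<union> MBV a\<close> ag_\<mu> run_b] by blast
    ultimately show "\<exists>\<nu>'. (t, \<nu>') \<in> psem (Seq a b) \<and> agree \<nu> \<nu>' (X \<union> MBV (Seq a b))"
      by (auto simp: Un_assoc)
  qed
next
  case (Loop a)
  have "\<exists>\<nu>'. (t, \<nu>') \<in> (psem a)\<^sup>* \<and> agree \<nu> \<nu>' X"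
    if FV_a: "FV a \<subseteq> X" and "agree s t X" "(s, \<nu>) \<in> (psem a)\<^sup>*" for X s t \<nu>
  proof -
    have "\<exists>\<nu>'. (t', \<nu>') \<in> psem a \<and> agree \<nu> \<nu>' X"
      if "agree s' t' X" "(s', \<nu>) \<in> psem a" for s' t' \<nu>
      using Loop.IH[rule_format, OF FV_a that] by (meson agree_mono sup_ge1)
    with rtrancl_coincidence that(2,3) show ?thesis by blast
  qed
  then show ?case by simp
next
  case (Geq a b)
  then show ?case
    using tsem_coincidence agree_mono by (metis FVf.simps(1) fsem.simps(1) mem_Collect_eq sup_ge1 sup_ge2)
next
  case (Not p)
  then show ?case using agree_sym by (metis ComplD ComplI FVf.simps(2) fsem.simps(2))
next
  case (And p q)
  then show ?case using agree_mono by (metis FVf.simps(3) IntD1 IntD2 IntI fsem.simps(3) sup_ge1 sup_ge2)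
next
  case (Exists x p)
  have "agree (s(x := r)) (t(x := r)) (FVf p)" if "agree s t (FVf (Exists x p))" for s t r
    using that by (auto simp: agree_def)
  with Exists show ?case by (simp, blast)
next
  case (Box a p)
  show ?case
  proof (intro allI impI)
    fix s t assume ag: "agree s t (FVf (Box a p))" and box: "s \<in> fsem (Box a p)"
    have "\<nu>' \<in> fsem p" if run_t: "(t, \<nu>') \<in> psem a" for \<nu>'
    proof -
      obtain \<nu> where "(s, \<nu>) \<in> psem a" and ag_\<nu>: "agree \<nu>' \<nu> (FVf (Box a p) \<union> MBV a)"
        using Box.IH(1)[rule_format, OF _ agree_sym[OF ag] run_t] by auto
      then have "\<nu> \<in> fsem p" using box by auto
      moreover have "agree \<nu> \<nu>' (FVf p)" using agree_sym[OF ag_\<nu>] by (rule agree_mono) auto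
      ultimately show ?thesis using Box.IH(2) by blast
    qed
    then show "t \<in> fsem (Box a p)" by simp
  qed
qed

lemma psem_coincidence:
  "FV a \<subseteq> X \<Longrightarrow> agree s t X \<Longrightarrow> (s, \<nu>) \<in> psem a \<Longrightarrow>
    \<exists>\<nu>'. (t, \<nu>') \<in> psem a \<and> agree \<nu> \<nu>' (X \<union> MBV a)"
  using coincidence(1) by blast

definition hsim :: "hp \<Rightarrow> var set \<Rightarrow> hp \<Rightarrow> bool" where
  "hsim a H b \<longleftrightarrow>
     (\<forall>s0 s1. (s0, s1) \<in> psem a \<longrightarrow>
        (\<exists>t0 t1. (t0, t1) \<in> psem b \<and> agree s0 t0 H \<and> agree s1 t1 H))"

lemma hequiv_iff_hsim: "hequiv a H b \<longleftrightarrow> hsim a H b \<and> hsim b H a"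
  by (simp add: hequiv_def hsim_def)

lemma hsim_Seq:
  assumes sim_PQ: "hsim P H Q" and sim_RS: "hsim R H S" and FV_S: "FV S \<subseteq> H"
  shows "hsim (Seq P R) H (Seq Q S)"
  unfolding hsim_def
proof (intro allI impI)
  fix s0 s2 assume "(s0, s2) \<in> psem (Seq P R)"
  then obtain s1 where "(s0, s1) \<in> psem P" "(s1, s2) \<in> psem R" by auto
  then obtain t0 t1 u1 u2 where run_Q: "(t0, t1) \<in> psem Q" "agree s0 t0 H" "agree s1 t1 H"
    and run_S: "(u1, u2) \<in> psem S" "agree s1 u1 H" "agree s2 u2 H"
    using sim_PQ sim_RS unfolding hsim_def by meson
  have "agree u1 t1 H"
    using run_Q(3) run_S(2) agree_sym agree_trans by blast
  then obtain w where "(t1, w) \<in> psem S" "agree u2 w (H \<union> MBV S)"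
    using psem_coincidence[OF FV_S] run_S(1) by blast
  then have "agree s2 w H"
    using run_S(3) agree_trans agree_mono by blast
  with run_Q \<open>(t1, w) \<in> psem S\<close>
  show "\<exists>t0 t2. (t0, t2) \<in> psem (Seq Q S) \<and> agree s0 t0 H \<and> agree s2 t2 H"
    by auto
qed

theorem theorem2:
  assumes "loop_free A" and "loop_free B" and "loop_free C" and "loop_free D"
    and "FV C \<union> FV D \<subseteq> H"
    and "hequiv A H B" and "hequiv C H D"
  shows "hequiv (Seq A C) H (Seq B D)"
  using assms(5-7) hsim_Seq by (simp add: hequiv_iff_hsim)

end
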